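(* Let $G=(V,E)$ with $|V|=n$. Assume that there is $\alpha>0$ such that $d(v)\ge\alpha n$ for all $v\in V$ and $e(W,V\setminus W)\ge\alpha|W||V\setminus W|$ for all $W\subseteq V$. Then for all $u,w\in V$ there is $1\le d\le 8/\alpha^2+2$ such that there are at least $(\alpha^4/64)^{d+1}n^{d-1}$ paths of length $d$ from $u$ to $w$.
   Context: $d(v)$ is the degree of $v$; $e(U,W)$ is the number of edges with one endpoint in $U$ and the other in $W$; the length of a path is its number of edges. *)

theory Defs
  imports Complex_Main
begin

definition simple_graph :: "'a set \<Rightarrow> ('a \<Rightarrow> 'a \<Rightarrow> bool) \<Rightarrow> bool" where
  "simple_graph V E \<longleftrightarrow> finite V \<and> (\<forall>x y. E x y \<longrightarrow> x \<in> V \<and> y \<in> V)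
     \<and> (\<forall>x y. E x y \<longrightarrow> E y x) \<and> (\<forall>x. \<not> E x x)"

definition degree :: "'a set \<Rightarrow> ('a \<Rightarrow> 'a \<Rightarrow> bool) \<Rightarrow> 'a \<Rightarrow> nat" where
  "degree V E v = card {y \<in> V. E v y}"

text \<open>e(U,W): number of edges with one endpoint in U and the other in W
  (used for disjoint U, W, so each edge is counted once).\<close>
definition e_between :: "('a \<Rightarrow> 'a \<Rightarrow> bool) \<Rightarrow> 'a set \<Rightarrow> 'a set \<Rightarrow> nat" where
  "e_between E U W = card {(x, y). x \<in> U \<and> y \<in> W \<and> E x y}"

definition paths :: "'a set \<Rightarrow> ('a \<Rightarrow> 'a \<Rightarrow> bool) \<Rightarrow> nat \<Rightarrow> 'a \<Rightarrow> 'a \<Rightarrow> 'a list set" where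
  "paths V E d u w = {p. length p = d + 1 \<and> distinct p \<and> set p \<subseteq> V
      \<and> hd p = u \<and> last p = w \<and> (\<forall>i < d. E (p ! i) (p ! Suc i))}"

end

(*
  Grow layers around u: the first layer is the neighbourhood of u, and layer k + 2 consists of
  layer k together with all vertices having at least \<gamma> n = \<alpha>\<^sup>2 n / 4 neighbours in layer k + 1.
  While many vertices lie outside two consecutive layers, the expansion condition forces
  \<alpha>\<^sup>2 n / 4 new vertices into the next pair; so after at most 4 / \<alpha>\<^sup>2 steps the remainder is
  small enough that, by the minimum degree, every vertex w lies in one of the next two layers.

  Paths are then counted backwards from w: a vertex that entered layer k + 2 has at least
  \<gamma> n - d neighbours in layer k + 1 off any given set of d vertices, and each of them carries
  paths avoiding the vertices already used. This gives a weighted sum over lengths, with weight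
  (\<gamma> n - d)^-i on paths of length i + 1, that is at least 1; one of its at most d terms
  is at least 1 / d.
*)

theory Submission
  imports Defs "HOL-Library.Transitive_Closure_Table"
begin

lemma exists_stop_if_bounded_increments:
  fixes f :: "nat \<Rightarrow> real"
  assumes "0 < \<delta>" and "\<And>k. 0 \<le> f k" and "\<And>k. f k \<le> B"
    and "\<And>k. \<not> P k \<Longrightarrow> f k + \<delta> \<le> f (Suc k)"
  shows "\<exists>j. real j \<le> B / \<delta> \<and> P j"
proof (rule ccontr)
  assume none: "\<not> ?thesis"
  define K where "K = nat \<lfloor>B / \<delta>\<rfloor> + 1"
  have "0 \<le> B / \<delta>"
    using assms(1) assms(2,3)[of 0] by simp
  then have before_K: "real k \<le> B / \<delta>" if "k < K" for k
    using that unfolding K_def by linarith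
  have "real k * \<delta> \<le> f k" if "k \<le> K" for k
    using that
  proof (induction k)
    case (Suc k)
    then have "\<not> P k"
      using none before_K by auto
    then show ?case
      using Suc assms(4)[of k] by (simp add: algebra_simps)
  qed (simp add: assms(2))
  then have "real K * \<delta> \<le> B"
    using assms(3) order_trans by blast
  moreover have "B / \<delta> < real K"
    unfolding K_def by linarith
  ultimately show False
    using assms(1) by (simp add: field_simps)
qed

locale finite_simple_graph =
  fixes V :: "'a set" and E :: "'a \<Rightarrow> 'a \<Rightarrow> bool"
  assumes simple_graph: "simple_graph V E"
begin

lemma finite_V: "finite V"
  using simple_graph by (simp add: simple_graph_def)

lemma edge_in_V: "E x y \<Longrightarrow> x \<in> V" "E x y \<Longrightarrow> y \<in> V"
  using simple_graph by (auto simp: simple_graph_def)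

lemma edge_sym: "E x y \<Longrightarrow> E y x"
  using simple_graph by (simp add: simple_graph_def)

lemma edge_irrefl: "\<not> E x x"
  using simple_graph by (simp add: simple_graph_def)

definition nbhd :: "'a \<Rightarrow> 'a set" where
  "nbhd v = {y \<in> V. E v y}"

lemma nbhd_subset: "nbhd v \<subseteq> V"
  by (auto simp: nbhd_def)

lemma finite_nbhd: "finite (nbhd v)"
  using finite_V nbhd_subset by (rule finite_subset[rotated])

lemma card_nbhd: "card (nbhd v) = degree V E v"
  by (simp add: nbhd_def degree_def)

lemma degree_less_card: "v \<in> V \<Longrightarrow> degree V E v < card V"
  unfolding card_nbhd[symmetric]
  using finite_V edge_irrefl by (intro psubset_card_mono) (auto simp: nbhd_def)

lemma e_between_compl_eq_sum:
  assumes "W \<subseteq> V"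
  shows "e_between E W (V - W) = (\<Sum>y\<in>V - W. card (nbhd y \<inter> W))"
proof -
  have "{(x, y). x \<in> W \<and> y \<in> V - W \<and> E x y} = prod.swap ` (SIGMA y:V - W. nbhd y \<inter> W)"
    using assms edge_sym by (auto simp: nbhd_def image_iff)
  then have "e_between E W (V - W) = card (SIGMA y:V - W. nbhd y \<inter> W)"
    unfolding e_between_def by (simp add: card_image)
  also have "\<dots> = (\<Sum>y\<in>V - W. card (nbhd y \<inter> W))"
    using finite_V finite_nbhd by (intro card_SigmaI) auto
  finally show ?thesis .
qed

lemma e_between_compl_le:
  assumes "W \<subseteq> V" and "M \<subseteq> V - W" and "0 \<le> b"
    and "\<forall>r \<in> V - W - M. real (card (nbhd r \<inter> W)) \<le> b"
  shows "real (e_between E W (V - W)) \<le> real (card M) * real (card W) + real (card (V - W)) * b"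
proof -
  let ?f = "\<lambda>r. real (card (nbhd r \<inter> W))"
  have "real (e_between E W (V - W)) = (\<Sum>r\<in>V - W. ?f r)"
    using e_between_compl_eq_sum[OF assms(1)] by simp
  also have "\<dots> = (\<Sum>r\<in>V - W - M. ?f r) + (\<Sum>r\<in>M. ?f r)"
    using assms(2) finite_V by (intro sum.subset_diff) auto
  also have "(\<Sum>r\<in>M. ?f r) \<le> real (card M) * real (card W)"
    using finite_subset[OF assms(1) finite_V]
    by (intro sum_bounded_above) (simp add: card_mono)
  also have "(\<Sum>r\<in>V - W - M. ?f r) \<le> real (card (V - W - M)) * b"
    using assms(4) by (intro sum_bounded_above) auto
  also have "\<dots> \<le> real (card (V - W)) * b"
    using assms(3) finite_V by (intro mult_right_mono) (auto intro: card_mono)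
  finally show ?thesis by simp
qed

lemma finite_paths: "finite (paths V E l a b)"
proof (rule finite_subset)
  show "paths V E l a b \<subseteq> {xs. set xs \<subseteq> V \<and> length xs = Suc l}"
    by (auto simp: paths_def)
  show "finite {xs. set xs \<subseteq> V \<and> length xs = Suc l}"
    by (rule finite_lists_length_eq[OF finite_V])
qed

lemma paths_snoc:
  assumes p: "p \<in> paths V E l a y" and "E y x" and "x \<notin> set p"
  shows "p @ [x] \<in> paths V E (Suc l) a x"
proof -
  have len: "length p = Suc l" and edges: "\<forall>i<l. E (p ! i) (p ! Suc i)"
    using p by (auto simp: paths_def)
  have "p \<noteq> []"
    using len by auto
  then have last: "p ! l = y"
    using p len by (auto simp: paths_def last_conv_nth)
  have "E ((p @ [x]) ! i) ((p @ [x]) ! Suc i)" if "i < Suc l" for i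
    using that len last edges \<open>E y x\<close> by (cases "i < l") (auto simp: nth_append less_Suc_eq)
  then show ?thesis
    using p assms(3) edge_in_V(2)[OF \<open>E y x\<close>] \<open>p \<noteq> []\<close> by (auto simp: paths_def)
qed

lemma rtrancl_path_in_paths:
  "rtrancl_path E a xs b \<Longrightarrow> a \<in> V \<Longrightarrow> distinct (a # xs)
    \<Longrightarrow> rev (a # xs) \<in> paths V E (length xs) b a"
proof (induction rule: rtrancl_path.induct)
  case (base x)
  then show ?case by (simp add: paths_def)
next
  case (step x y ys z)
  have "rev (y # ys) \<in> paths V E (length ys) z y"
    using step edge_in_V by auto
  from paths_snoc[OF this edge_sym[OF \<open>E x y\<close>]] show ?case
    using step.prems by simp
qed

lemma rtrancl_path_imp_paths_nonempty:
  assumes "rtrancl_path E a xs b" and "a \<in> V" and "a \<noteq> b"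
  shows "\<exists>l. 1 \<le> l \<and> l \<le> length xs \<and> paths V E l b a \<noteq> {}"
proof -
  obtain ys where ys: "rtrancl_path E a ys b" "distinct (a # ys)" "set ys \<subseteq> set xs"
    using rtrancl_path_distinct[OF assms(1)] by blast
  have "length ys \<le> length xs"
    using ys(2,3) card_mono[OF _ ys(3)] card_length[of xs] by (simp add: distinct_card)
  moreover have "ys \<noteq> []"
    using ys(1) assms(3) by (auto elim: rtrancl_path.cases)
  moreover have "rev (a # ys) \<in> paths V E (length ys) b a"
    using rtrancl_path_in_paths ys(1,2) assms(2) by blast
  ultimately show ?thesis
    by (intro exI[of _ "length ys"]) (auto simp: Suc_le_eq)
qed

definition avoiding_paths :: "'a \<Rightarrow> 'a set \<Rightarrow> nat \<Rightarrow> 'a \<Rightarrow> 'a list set" where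
  "avoiding_paths u F l x = {p \<in> paths V E l u x. set p \<inter> F = {}}"

lemma finite_avoiding_paths: "finite (avoiding_paths u F l x)"
  using finite_paths[of l u x] by (simp add: avoiding_paths_def)

lemma avoiding_paths_empty [simp]: "avoiding_paths u {} l x = paths V E l u x"
  by (simp add: avoiding_paths_def)

lemma sum_card_avoiding_paths_le:
  assumes "finite Y" and "\<forall>y\<in>Y. E y x" and "x \<notin> F"
  shows "(\<Sum>y\<in>Y. card (avoiding_paths u (insert x F) l y)) \<le> card (avoiding_paths u F (Suc l) x)"
proof -
  let ?P = "\<lambda>y. (\<lambda>p. p @ [x]) ` avoiding_paths u (insert x F) l y"
  have "(\<Sum>y\<in>Y. card (avoiding_paths u (insert x F) l y)) = (\<Sum>y\<in>Y. card (?P y))"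
    by (intro sum.cong refl card_image[symmetric]) (auto simp: inj_on_def)
  also have "\<dots> = card (\<Union>y\<in>Y. ?P y)"
  proof (rule card_UN_disjoint[symmetric])
    show "\<forall>y\<in>Y. finite (?P y)"
      using finite_avoiding_paths by blast
    show "\<forall>y\<in>Y. \<forall>y'\<in>Y. y \<noteq> y' \<longrightarrow> ?P y \<inter> ?P y' = {}"
      by (auto simp: avoiding_paths_def paths_def)
  qed fact
  also have "\<dots> \<le> card (avoiding_paths u F (Suc l) x)"
    using assms paths_snoc
    by (intro card_mono finite_avoiding_paths) (fastforce simp: avoiding_paths_def)
  finally show ?thesis .
qed

definition path_weight :: "real \<Rightarrow> 'a \<Rightarrow> 'a set \<Rightarrow> 'a \<Rightarrow> nat \<Rightarrow> real" where
  "path_weight m u F x j = (\<Sum>i<j. real (card (avoiding_paths u F (Suc i) x)) / m ^ i)"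

lemma path_weight_mono:
  "0 \<le> m \<Longrightarrow> j \<le> k \<Longrightarrow> path_weight m u F x j \<le> path_weight m u F x k"
  unfolding path_weight_def by (intro sum_mono2) auto

lemma path_weight_extend:
  assumes "finite Y" and "\<forall>y\<in>Y. E y x" and "x \<notin> F" and "0 < m"
  shows "(\<Sum>y\<in>Y. path_weight m u (insert x F) y j) / m \<le> path_weight m u F x (Suc j)"
proof -
  let ?a = "\<lambda>G y i. real (card (avoiding_paths u G (Suc i) y))"
  have "(\<Sum>y\<in>Y. path_weight m u (insert x F) y j) / m
      = (\<Sum>i<j. (\<Sum>y\<in>Y. ?a (insert x F) y i) / m ^ Suc i)"
    unfolding path_weight_def sum_divide_distrib
    by (subst sum.swap) (simp add: mult.commute)
  also have "\<dots> \<le> (\<Sum>i<j. ?a F x (Suc i) / m ^ Suc i)"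
    using sum_card_avoiding_paths_le[OF assms(1-3)] assms(4)
    by (intro sum_mono divide_right_mono) (simp_all flip: of_nat_sum)
  also have "\<dots> \<le> path_weight m u F x (Suc j)"
    unfolding path_weight_def sum.lessThan_Suc_shift by simp
  finally show ?thesis .
qed

lemma path_weight_Suc_ge_one:
  assumes "finite Y" and "\<forall>y\<in>Y. E y x" and "x \<notin> F" and "0 < m" and "m \<le> real (card Y)"
    and "\<forall>y\<in>Y. 1 \<le> path_weight m u (insert x F) y j"
  shows "1 \<le> path_weight m u F x (Suc j)"
proof -
  have "1 \<le> real (card Y) / m"
    using assms(4,5) by simp
  also have "\<dots> \<le> (\<Sum>y\<in>Y. path_weight m u (insert x F) y j) / m"
    using assms(4,6) sum_bounded_below[of Y 1 "\<lambda>y. path_weight m u (insert x F) y j"]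
    by (intro divide_right_mono) auto
  also have "\<dots> \<le> path_weight m u F x (Suc j)"
    using assms(1-4) by (rule path_weight_extend)
  finally show ?thesis .
qed

definition heavy :: "real \<Rightarrow> 'a set \<Rightarrow> 'a set" where
  "heavy t S = {v \<in> V. t \<le> real (card (nbhd v \<inter> S))}"

fun layer :: "real \<Rightarrow> 'a \<Rightarrow> nat \<Rightarrow> 'a set" where
  "layer t u 0 = {}"
| "layer t u (Suc 0) = nbhd u"
| "layer t u (Suc (Suc k)) = heavy t (layer t u (Suc k)) \<union> layer t u k"

lemma layer_subset: "layer t u k \<subseteq> V"
  by (induction t u k rule: layer.induct) (auto simp: nbhd_def heavy_def)

lemma heavy_layer_subset: "0 < t \<Longrightarrow> heavy t (layer t u k) \<subseteq> layer t u (Suc k)"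
  by (cases k) (auto simp: heavy_def)

lemma rtrancl_path_from_layer:
  "0 < t \<Longrightarrow> x \<in> layer t u j \<Longrightarrow> \<exists>xs. rtrancl_path E x xs u \<and> length xs \<le> j"
proof (induction t u j arbitrary: x rule: layer.induct)
  case (2 t u)
  then have "rtrancl_path E x [u] u"
    by (auto simp: nbhd_def edge_sym intro: rtrancl_path.intros)
  then show ?case by force
next
  case (3 t u k)
  show ?case
  proof (cases "x \<in> layer t u k")
    case True
    then show ?thesis using "3.IH"(2) "3.prems"(1) le_SucI by blast
  next
    case False
    then have "t \<le> real (card (nbhd x \<inter> layer t u (Suc k)))"
      using "3.prems"(2) by (simp add: heavy_def)
    then obtain y where y: "y \<in> nbhd x" "y \<in> layer t u (Suc k)"
      using "3.prems"(1) by (metis card.empty disjoint_iff not_le of_nat_0)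
    then obtain ys where "rtrancl_path E y ys u" "length ys \<le> Suc k"
      using "3.IH"(1) "3.prems"(1) by blast
    then show ?thesis
      using y by (intro exI[of _ "y # ys"]) (auto simp: nbhd_def intro: rtrancl_path.step)
  qed
qed simp

lemma paths_from_layer_nonempty:
  assumes "0 < t" and "x \<in> layer t u j" and "x \<noteq> u"
  shows "\<exists>l. 1 \<le> l \<and> l \<le> j \<and> paths V E l u x \<noteq> {}"
proof -
  obtain xs where "rtrancl_path E x xs u" "length xs \<le> j"
    using rtrancl_path_from_layer assms(1,2) by blast
  then show ?thesis
    using rtrancl_path_imp_paths_nonempty layer_subset assms(2,3) by (meson order_trans subsetD)
qed

text \<open>F holds the vertices already used on the way back from x; the bound card F + j \<le> d
  leaves at least t - d usable neighbours in every step.\<close>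

lemma path_weight_layer:
  assumes "x \<in> layer t u j" and "x \<noteq> u" and "x \<notin> F" and "u \<notin> F" and "finite F"
    and "card F + j \<le> d" and "real d < t"
  shows "1 \<le> path_weight (t - d) u F x j"
  using assms
proof (induction t u j arbitrary: x F rule: layer.induct)
  case (2 t u)
  then have "[u, x] \<in> avoiding_paths u F 1 x"
    by (auto simp: avoiding_paths_def paths_def nbhd_def edge_in_V)
  then have "1 \<le> card (avoiding_paths u F 1 x)"
    using finite_avoiding_paths by (metis One_nat_def Suc_leI card_gt_0_iff empty_iff)
  then show ?case by (simp add: path_weight_def)
next
  case (3 t u k)
  let ?m = "t - real d"
  show ?case
  proof (cases "x \<in> layer t u k")
    case True
    then have "1 \<le> path_weight ?m u F x k"
      using "3.IH"(2) "3.prems" by simp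
    also have "\<dots> \<le> path_weight ?m u F x (Suc (Suc k))"
      using "3.prems"(7) by (intro path_weight_mono) auto
    finally show ?thesis .
  next
    case False
    define Y where "Y = nbhd x \<inter> layer t u (Suc k) - insert u F"
    have "finite Y" and Y_edges: "\<forall>y\<in>Y. E y x"
      using finite_nbhd by (auto simp: Y_def nbhd_def edge_sym)
    have "t \<le> real (card (nbhd x \<inter> layer t u (Suc k)))"
      using False "3.prems"(1) by (simp add: heavy_def)
    moreover have "card (nbhd x \<inter> layer t u (Suc k)) - Suc (card F) \<le> card Y"
      using diff_card_le_card_Diff[of "insert u F"] "3.prems"(4,5) by (simp add: Y_def)
    ultimately have "?m \<le> real (card Y)"
      using "3.prems"(6) by linarith
    moreover have "1 \<le> path_weight ?m u (insert x F) y (Suc k)" if "y \<in> Y" for y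
    proof -
      have "y \<noteq> x"
        using that edge_irrefl by (auto simp: Y_def nbhd_def)
      then show ?thesis
        using that "3.prems" by (intro "3.IH"(1)) (auto simp: Y_def card_insert_if)
    qed
    ultimately show ?thesis
      using \<open>finite Y\<close> Y_edges "3.prems"(3,7) by (intro path_weight_Suc_ge_one) auto
  qed
qed simp

lemma many_paths_from_layer:
  assumes "x \<in> layer t u j" and "x \<noteq> u" and "real j < t"
  shows "\<exists>i<j. (t - j) ^ i / j \<le> real (card (paths V E (Suc i) u x))"
proof (rule ccontr)
  assume "\<not> ?thesis"
  then have small: "real (card (paths V E (Suc i) u x)) / (t - j) ^ i < 1 / j" if "i < j" for i
    using that assms(3) by (auto simp: field_simps not_le)
  have "j \<noteq> 0"
    using assms(1) by (cases j) auto
  have "1 \<le> path_weight (t - j) u {} x j"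
    using path_weight_layer assms by auto
  also have "\<dots> < (\<Sum>i<j. 1 / j)"
    unfolding path_weight_def using small \<open>j \<noteq> 0\<close> by (intro sum_strict_mono) auto
  also have "\<dots> = 1"
    using \<open>j \<noteq> 0\<close> by simp
  finally show False by simp
qed

end

lemma power_bound_if_small:
  fixes c x :: real
  assumes "0 \<le> c" and "c \<le> 1" and "0 \<le> x" and "c * x \<le> 1" and "1 \<le> l"
  shows "c ^ (l + 1) * x ^ (l - 1) \<le> 1"
proof -
  have "c ^ (l + 1) * x ^ (l - 1) = c\<^sup>2 * (c * x) ^ (l - 1)"
    using assms(5) by (cases l) (auto simp: power_mult_distrib power2_eq_square)
  also have "\<dots> \<le> 1"
  proof (rule mult_le_one)
    show "c\<^sup>2 \<le> 1" and "(c * x) ^ (l - 1) \<le> 1"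
      using assms(1-4) by (auto intro: power_le_one)
  qed (use assms(1,3) in auto)
  finally show ?thesis .
qed

lemma power_bound_if_large:
  fixes \<alpha> x :: real and d :: nat
  assumes "0 < \<alpha>" and "\<alpha> \<le> 1" and "1 \<le> d" and "real d \<le> 4 / \<alpha>\<^sup>2 + 2"
    and "1 \<le> \<alpha> ^ 4 / 64 * x"
  shows "real d < \<alpha>\<^sup>2 / 4 * x"
    and "(\<alpha> ^ 4 / 64) ^ (i + 2) * x ^ i \<le> (\<alpha>\<^sup>2 / 4 * x - real d) ^ i / real d"
proof -
  define c where "c = \<alpha> ^ 4 / 64"
  have "0 < c" and "c \<le> 1"
    using assms(1,2) power_le_one[of \<alpha> 4] by (auto simp: c_def)
  have "\<alpha>\<^sup>2 \<le> 1"
    using assms(1,2) by (simp add: power_le_one)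
  then have "12 \<le> 12 / \<alpha>\<^sup>2"
    using assms(1) by (simp add: field_simps)
  then have "4 / \<alpha>\<^sup>2 + 2 \<le> 16 / \<alpha>\<^sup>2 - 1"
    by (simp add: diff_divide_distrib add_divide_distrib)
  also have "\<dots> \<le> (16 / \<alpha>\<^sup>2 - 1) * (c * x)"
    using \<open>\<alpha>\<^sup>2 \<le> 1\<close> assms(1,5) by (intro mult_le_cancel_left1[THEN iffD2]) (auto simp: c_def field_simps)
  also have "\<dots> = \<alpha>\<^sup>2 / 4 * x - c * x"
    using assms(1) by (simp add: c_def field_simps power2_eq_square power4_eq_xxxx)
  finally have gap: "c * x \<le> \<alpha>\<^sup>2 / 4 * x - real d"
    using assms(4) by linarith
  then show "real d < \<alpha>\<^sup>2 / 4 * x"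
    using assms(5) unfolding c_def by linarith
  have "c * real d \<le> c * (4 / \<alpha>\<^sup>2 + 2)"
    using assms(4) \<open>0 < c\<close> by simp
  also have "\<dots> = \<alpha>\<^sup>2 / 16 + \<alpha> ^ 4 / 32"
    using assms(1) by (simp add: c_def field_simps power2_eq_square power4_eq_xxxx)
  also have "\<dots> \<le> 1"
    using \<open>\<alpha>\<^sup>2 \<le> 1\<close> power_le_one[of \<alpha> 4] assms(1,2) by simp
  finally have "c * (c * real d) \<le> c * 1"
    using \<open>0 < c\<close> by (intro mult_left_mono) auto
  then have "c\<^sup>2 * real d \<le> 1"
    using \<open>c \<le> 1\<close> by (simp add: power2_eq_square mult.assoc)
  then have "c\<^sup>2 \<le> 1 / real d"
    using assms(3) by (simp add: field_simps)
  moreover have "(c * x) ^ i \<le> (\<alpha>\<^sup>2 / 4 * x - real d) ^ i"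
    using gap \<open>0 < c\<close> assms(5) by (intro power_mono) (auto simp: c_def)
  ultimately have "c\<^sup>2 * (c * x) ^ i \<le> 1 / real d * (\<alpha>\<^sup>2 / 4 * x - real d) ^ i"
    using \<open>0 < c\<close> assms(3,5) by (intro mult_mono) (auto simp: c_def)
  moreover have "c ^ (i + 2) * x ^ i = c\<^sup>2 * (c * x) ^ i"
    by (simp add: power_mult_distrib power_add power2_eq_square)
  ultimately show "(\<alpha> ^ 4 / 64) ^ (i + 2) * x ^ i \<le> (\<alpha>\<^sup>2 / 4 * x - real d) ^ i / real d"
    by (simp add: c_def)
qed

locale expander = finite_simple_graph +
  fixes \<alpha> :: real
  assumes alpha_pos: "0 < \<alpha>"
    and min_degree: "\<forall>v\<in>V. \<alpha> * real (card V) \<le> real (degree V E v)"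
    and expansion: "\<forall>W\<subseteq>V. \<alpha> * real (card W) * real (card (V - W)) \<le> real (e_between E W (V - W))"
begin

definition threshold :: real where
  "threshold = \<alpha>\<^sup>2 / 4 * real (card V)"

definition layer_pair :: "'a \<Rightarrow> nat \<Rightarrow> 'a set" where
  "layer_pair u k = layer threshold u k \<union> layer threshold u (Suc k)"

lemma alpha_less_one:
  assumes "V \<noteq> {}"
  shows "\<alpha> < 1"
proof -
  obtain v where "v \<in> V"
    using assms by blast
  then have "\<alpha> * real (card V) < real (card V)"
    using min_degree degree_less_card[of v] by (meson of_nat_less_iff order_le_less_trans)
  then show ?thesis
    using mult_less_cancel_right[of \<alpha> "real (card V)" 1] by simp
qed

lemma threshold_pos: "V \<noteq> {} \<Longrightarrow> 0 < threshold"
  using alpha_pos finite_V by (simp add: threshold_def card_gt_0_iff)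

lemma layer_pair_subset: "layer_pair u k \<subseteq> V"
  using layer_subset by (auto simp: layer_pair_def)

lemma nbhd_subset_layer_pair: "nbhd u \<subseteq> layer_pair u k"
  by (induction k) (auto simp: layer_pair_def)

lemma card_layer_pair_ge:
  assumes "u \<in> V"
  shows "\<alpha> * real (card V) \<le> real (card (layer_pair u k))"
proof -
  have "card (nbhd u) \<le> card (layer_pair u k)"
    using nbhd_subset_layer_pair layer_pair_subset finite_V by (meson card_mono finite_subset)
  then show ?thesis
    using min_degree assms by (fastforce simp: card_nbhd)
qed

lemma in_next_layers_if_small_compl:
  assumes "real (card (V - layer_pair u k)) \<le> (\<alpha> - \<alpha>\<^sup>2 / 2) * real (card V)" and "w \<in> V"
  shows "w \<in> layer threshold u (Suc k) \<union> layer threshold u (Suc (Suc k))"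
proof -
  let ?a = "card (nbhd w \<inter> layer threshold u k)" and ?b = "card (nbhd w \<inter> layer threshold u (Suc k))"
  have "nbhd w \<subseteq> (nbhd w \<inter> layer threshold u k) \<union> (nbhd w \<inter> layer threshold u (Suc k))
      \<union> (V - layer_pair u k)"
    using nbhd_subset by (auto simp: layer_pair_def)
  then have "card (nbhd w) \<le> card ((nbhd w \<inter> layer threshold u k) \<union> (nbhd w \<inter> layer threshold u (Suc k))
      \<union> (V - layer_pair u k))"
    using finite_V finite_nbhd by (intro card_mono) auto
  also have "\<dots> \<le> ?a + ?b + card (V - layer_pair u k)"
    by (meson card_Un_le add_le_mono1 le_trans)
  finally have "card (nbhd w) \<le> ?a + ?b + card (V - layer_pair u k)" .
  moreover have "\<alpha> * real (card V) \<le> real (card (nbhd w))"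
    using min_degree assms(2) by (simp add: card_nbhd)
  moreover have "2 * threshold = \<alpha>\<^sup>2 / 2 * real (card V)"
    by (simp add: threshold_def)
  ultimately have "2 * threshold \<le> real ?a + real ?b"
    using assms(1) by (simp add: algebra_simps)
  then have "w \<in> heavy threshold (layer threshold u k) \<or> w \<in> heavy threshold (layer threshold u (Suc k))"
    using assms(2) by (auto simp: heavy_def)
  then show ?thesis
    using heavy_layer_subset threshold_pos assms(2) by fastforce
qed

lemma sparse_outside_layer_pair:
  assumes "V \<noteq> {}" and "r \<in> V - layer_pair u k" and "r \<notin> heavy threshold (layer threshold u (Suc k))"
  shows "real (card (nbhd r \<inter> layer_pair u k)) \<le> 2 * threshold"
proof -
  have "r \<notin> heavy threshold (layer threshold u k)"
    using assms(2) heavy_layer_subset[OF threshold_pos[OF assms(1)]] by (auto simp: layer_pair_def)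
  then have "real (card (nbhd r \<inter> layer threshold u k)) \<le> threshold"
    and "real (card (nbhd r \<inter> layer threshold u (Suc k))) \<le> threshold"
    using assms(2,3) by (auto simp: heavy_def)
  moreover have "card (nbhd r \<inter> layer_pair u k)
      \<le> card (nbhd r \<inter> layer threshold u k) + card (nbhd r \<inter> layer threshold u (Suc k))"
    unfolding layer_pair_def Int_Un_distrib by (rule card_Un_le)
  ultimately show ?thesis
    by linarith
qed

lemma card_new_heavy_ge:
  assumes "u \<in> V"
  shows "\<alpha> / 2 * real (card (V - layer_pair u k))
    \<le> real (card ((V - layer_pair u k) \<inter> heavy threshold (layer threshold u (Suc k))))"
proof -
  define W where "W = layer_pair u k"
  define M where "M = (V - W) \<inter> heavy threshold (layer threshold u (Suc k))"
  have "V \<noteq> {}"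
    using assms(1) by blast
  have W_big: "\<alpha> * real (card V) \<le> real (card W)"
    using card_layer_pair_ge[OF assms(1)] by (simp add: W_def)
  moreover have "0 < \<alpha> * real (card V)"
    using alpha_pos finite_V \<open>V \<noteq> {}\<close> by (simp add: card_gt_0_iff)
  ultimately have "0 < real (card W)"
    by linarith
  have "\<alpha> * real (card W) * real (card (V - W)) \<le> real (e_between E W (V - W))"
    using expansion layer_pair_subset by (simp add: W_def)
  also have "\<dots> \<le> real (card M) * real (card W) + real (card (V - W)) * (2 * threshold)"
    using sparse_outside_layer_pair[OF \<open>V \<noteq> {}\<close>] threshold_pos[OF \<open>V \<noteq> {}\<close>] layer_pair_subset
    by (intro e_between_compl_le) (auto simp: W_def M_def)
  also have "\<dots> \<le> real (card M) * real (card W) + real (card (V - W)) * (\<alpha> / 2 * real (card W))"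
    using W_big alpha_pos
    by (intro add_left_mono mult_left_mono) (auto simp: threshold_def power2_eq_square)
  finally have "(\<alpha> / 2 * real (card (V - W))) * real (card W) \<le> real (card M) * real (card W)"
    by (simp add: algebra_simps)
  then show ?thesis
    using \<open>0 < real (card W)\<close> by (simp add: W_def M_def)
qed

lemma card_layer_pair_Suc_ge:
  assumes "u \<in> V" and large: "(\<alpha> - \<alpha>\<^sup>2 / 2) * real (card V) < real (card (V - layer_pair u k))"
  shows "real (card (layer_pair u k)) + \<alpha>\<^sup>2 / 4 * real (card V) \<le> real (card (layer_pair u (Suc k)))"
proof -
  define W where "W = layer_pair u k"
  define M where "M = (V - W) \<inter> heavy threshold (layer threshold u (Suc k))"
  have "\<alpha> / 2 \<le> \<alpha> - \<alpha>\<^sup>2 / 2"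
    using alpha_less_one assms(1) alpha_pos by (fastforce simp: power2_eq_square)
  then have "\<alpha> / 2 * real (card V) \<le> (\<alpha> - \<alpha>\<^sup>2 / 2) * real (card V)"
    by (intro mult_right_mono) auto
  then have "\<alpha> / 2 * (\<alpha> / 2 * real (card V)) \<le> \<alpha> / 2 * real (card (V - W))"
    using large alpha_pos by (intro mult_left_mono) (auto simp: W_def)
  then have "\<alpha>\<^sup>2 / 4 * real (card V) \<le> real (card M)"
    using card_new_heavy_ge[OF assms(1), of k] by (simp add: W_def M_def power2_eq_square)
  moreover have "card W + card M = card (W \<union> M)"
    using finite_V layer_pair_subset
    by (intro card_Un_disjoint[symmetric]) (auto simp: W_def M_def intro: finite_subset)
  moreover have "W \<union> M \<subseteq> layer_pair u (Suc k)"
    using heavy_layer_subset[OF threshold_pos] assms(1)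
    by (auto simp: W_def M_def layer_pair_def)
  then have "card (W \<union> M) \<le> card (layer_pair u (Suc k))"
    using finite_V layer_pair_subset by (meson card_mono finite_subset)
  ultimately show ?thesis
    unfolding W_def by linarith
qed

lemma exists_layer_pair_small_compl:
  assumes "u \<in> V"
  shows "\<exists>j. real j \<le> 4 / \<alpha>\<^sup>2
    \<and> real (card (V - layer_pair u j)) \<le> (\<alpha> - \<alpha>\<^sup>2 / 2) * real (card V)"
proof -
  have "\<exists>j. real j \<le> real (card V) / (\<alpha>\<^sup>2 / 4 * real (card V))
    \<and> real (card (V - layer_pair u j)) \<le> (\<alpha> - \<alpha>\<^sup>2 / 2) * real (card V)"
  proof (rule exists_stop_if_bounded_increments[where f = "\<lambda>k. real (card (layer_pair u k))"])
    have "0 < real (card V)"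
      using assms finite_V by (auto simp: card_gt_0_iff)
    then show "0 < \<alpha>\<^sup>2 / 4 * real (card V)"
      using alpha_pos by simp
    show "real (card (layer_pair u k)) \<le> real (card V)" for k
      using finite_V layer_pair_subset by (simp add: card_mono)
    show "real (card (layer_pair u k)) + \<alpha>\<^sup>2 / 4 * real (card V) \<le> real (card (layer_pair u (Suc k)))"
      if "\<not> real (card (V - layer_pair u k)) \<le> (\<alpha> - \<alpha>\<^sup>2 / 2) * real (card V)" for k
      using card_layer_pair_Suc_ge[OF assms] that by simp
  qed simp
  moreover have "real (card V) / (\<alpha>\<^sup>2 / 4 * real (card V)) = 4 / \<alpha>\<^sup>2"
    using assms finite_V by (auto simp: card_gt_0_iff)
  ultimately show ?thesis
    by simp
qed

lemma vertex_in_early_layer: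
  assumes "u \<in> V" and "w \<in> V"
  shows "\<exists>d. 1 \<le> d \<and> real d \<le> 4 / \<alpha>\<^sup>2 + 2 \<and> w \<in> layer threshold u d"
proof -
  obtain j where "real j \<le> 4 / \<alpha>\<^sup>2" "real (card (V - layer_pair u j)) \<le> (\<alpha> - \<alpha>\<^sup>2 / 2) * real (card V)"
    using exists_layer_pair_small_compl[OF assms(1)] by blast
  then consider "w \<in> layer threshold u (Suc j)" | "w \<in> layer threshold u (Suc (Suc j))"
    using in_next_layers_if_small_compl[OF _ assms(2)] by blast
  then show ?thesis
  proof cases
    case 1
    then show ?thesis
      using \<open>real j \<le> 4 / \<alpha>\<^sup>2\<close> by (intro exI[of _ "Suc j"]) auto
  next
    case 2
    then show ?thesis
      using \<open>real j \<le> 4 / \<alpha>\<^sup>2\<close> by (intro exI[of _ "Suc (Suc j)"]) auto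
  qed
qed

lemma exists_length_with_many_paths:
  assumes u: "u \<in> V" and w: "w \<in> V" and uw: "u \<noteq> w"
  shows "\<exists>d. 1 \<le> d \<and> real d \<le> 4 / \<alpha>\<^sup>2 + 2
    \<and> (\<alpha> ^ 4 / 64) ^ (d + 1) * real (card V) ^ (d - 1) \<le> real (card (paths V E d u w))"
proof -
  obtain d0 where d0: "1 \<le> d0" "real d0 \<le> 4 / \<alpha>\<^sup>2 + 2" "w \<in> layer threshold u d0"
    using vertex_in_early_layer[OF u w] by blast
  have "\<alpha> \<le> 1"
    using alpha_less_one u by fastforce
  show ?thesis
  proof (cases "\<alpha> ^ 4 / 64 * real (card V) < 1")
    case True
    obtain l where l: "1 \<le> l" "l \<le> d0" "paths V E l u w \<noteq> {}"
      using paths_from_layer_nonempty[OF threshold_pos d0(3) uw[symmetric]] u by blast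
    then have "1 \<le> real (card (paths V E l u w))"
      using finite_paths by (simp add: Suc_le_eq card_gt_0_iff)
    moreover have "(\<alpha> ^ 4 / 64) ^ (l + 1) * real (card V) ^ (l - 1) \<le> 1"
      using True alpha_pos \<open>\<alpha> \<le> 1\<close> power_le_one[of \<alpha> 4] l(1) by (intro power_bound_if_small) auto
    ultimately show ?thesis
      using l d0(2) by (intro exI[of _ l]) auto
  next
    case False
    then have "real d0 < threshold"
      using power_bound_if_large(1)[OF alpha_pos \<open>\<alpha> \<le> 1\<close> d0(1,2)] by (simp add: threshold_def)
    then obtain i where i: "i < d0" "(threshold - d0) ^ i / d0 \<le> real (card (paths V E (Suc i) u w))"
      using many_paths_from_layer d0(3) uw by blast
    have "(\<alpha> ^ 4 / 64) ^ (Suc i + 1) * real (card V) ^ (Suc i - 1)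
        = (\<alpha> ^ 4 / 64) ^ (i + 2) * real (card V) ^ i"
      by simp
    also have "\<dots> \<le> (threshold - d0) ^ i / d0"
      using power_bound_if_large(2)[OF alpha_pos \<open>\<alpha> \<le> 1\<close> d0(1,2)] False by (simp add: threshold_def)
    also have "\<dots> \<le> real (card (paths V E (Suc i) u w))"
      by (fact i(2))
    finally show ?thesis
      using i(1) d0(2) by (intro exI[of _ "Suc i"]) auto
  qed
qed

end

theorem lemma2p11:
  fixes V :: "'a set" and E :: "'a \<Rightarrow> 'a \<Rightarrow> bool" and n :: nat and \<alpha> :: real
  assumes G: "simple_graph V E"
    and n: "card V = n"
    and alpha_pos: "\<alpha> > 0"
    and deg: "\<forall>v \<in> V. real (degree V E v) \<ge> \<alpha> * real n"
    and exp: "\<forall>W \<subseteq> V. real (e_between E W (V - W)) \<ge> \<alpha> * real (card W) * real (card (V - W))"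
    and u: "u \<in> V" and w: "w \<in> V" and uw: "u \<noteq> w"
  shows "\<exists>d::nat. 1 \<le> d \<and> real d \<le> 8 / \<alpha>^2 + 2 \<and>
           real (card (paths V E d u w)) \<ge> (\<alpha>^4 / 64) ^ (d + 1) * real n ^ (d - 1)"
proof -
  interpret expander V E \<alpha>
    using G alpha_pos deg exp n by unfold_locales auto
  obtain d where "1 \<le> d" "real d \<le> 4 / \<alpha>\<^sup>2 + 2"
    and "(\<alpha> ^ 4 / 64) ^ (d + 1) * real n ^ (d - 1) \<le> real (card (paths V E d u w))"
    using exists_length_with_many_paths[OF u w uw] n by blast
  moreover have "4 / \<alpha>\<^sup>2 \<le> 8 / \<alpha>\<^sup>2"
    using alpha_pos by (simp add: divide_right_mono)
  ultimately show ?thesis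
    by (intro exI[of _ d]) auto
qed

end
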